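(* Let $\mathcal T$ be a locally finite tessellation of ${\mathbb X}$ and $T$ a tile of $\mathcal T$. Then the boundary $\partial T$ is the union of the sides of $\mathcal T$ contained in $T$.
   Context: ${\mathbb X}$ is $\mathbb R^n$, the unit sphere $\mathbb S^n$, or hyperbolic $n$-space. A subspace is a complete totally geodesic submanifold; a hyperplane is a subspace of codimension 1; closed half-spaces are the closures of the two components of the complement of a hyperplane. A polyhedron is a nonempty intersection of a family of closed half-spaces whose boundary hyperplanes form a locally finite family; its codimension is that of the smallest subspace containing it and its relative interior $C^r$ is its interior in that subspace; it is thick if it has nonempty interior in ${\mathbb X}$. A tessellation is a set of thick polyhedra (tiles) covering ${\mathbb X}$ with pairwise disjoint interiors; locally finite means every compact set meets only finitely many tiles. A cell is a nonempty intersection $C$ of tiles such that for every tile $T'$ either $C\subseteq T'$ or $C^r\cap T'=\emptyset$; a side is a cell of codimension 1. *)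

theory Defs
  imports "HOL-Analysis.Analysis"
begin

text \<open>
  The three model geometries, all realised inside a Euclidean space of type 'a.
  Spherical n-space: the unit sphere of 'a, with n = DIM('a) - 1.
  Hyperbolic n-space: the hyperboloid model (upper sheet) in 'a with respect to
  the Lorentzian form that is negative in the direction of the unit vector e,
  with n = DIM('a) - 1.
\<close>

datatype geom = Euclidean | Spherical | Hyperbolic

definition lorentz :: "'a::euclidean_space \<Rightarrow> 'a \<Rightarrow> 'a \<Rightarrow> real" where
  "lorentz e x y = x \<bullet> y - 2 * (x \<bullet> e) * (y \<bullet> e)"

fun gspace :: "geom \<Rightarrow> 'a::euclidean_space \<Rightarrow> 'a set" where
  "gspace Euclidean e = UNIV"
| "gspace Spherical e = sphere 0 1"
| "gspace Hyperbolic e = {x. lorentz e x x = -1 \<and> x \<bullet> e > 0}"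

fun gdim :: "geom \<Rightarrow> 'a::euclidean_space itself \<Rightarrow> nat" where
  "gdim Euclidean _ = DIM('a)"
| "gdim Spherical _ = DIM('a) - 1"
| "gdim Hyperbolic _ = DIM('a) - 1"

text \<open>subspaces = complete totally geodesic submanifolds (nonempty)\<close>
definition is_gsubspace :: "geom \<Rightarrow> 'a::euclidean_space \<Rightarrow> 'a set \<Rightarrow> bool" where
  "is_gsubspace g e S \<longleftrightarrow> S \<noteq> {} \<and>
     (if g = Euclidean then affine S
      else (\<exists>L. subspace L \<and> S = gspace g e \<inter> L))"

definition gsdim :: "geom \<Rightarrow> 'a::euclidean_space set \<Rightarrow> nat" where
  "gsdim g S = (if g = Euclidean then nat (aff_dim S) else dim (span S) - 1)"

definition ghull :: "geom \<Rightarrow> 'a::euclidean_space \<Rightarrow> 'a set \<Rightarrow> 'a set" where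
  "ghull g e C = (if g = Euclidean then affine hull C else gspace g e \<inter> span C)"

definition is_ghyperplane :: "geom \<Rightarrow> 'a::euclidean_space \<Rightarrow> 'a set \<Rightarrow> bool" where
  "is_ghyperplane g e H \<longleftrightarrow> is_gsubspace g e H \<and> gsdim g H + 1 = gdim g TYPE('a)"

definition is_halfspace_of :: "geom \<Rightarrow> 'a::euclidean_space \<Rightarrow> 'a set \<Rightarrow> 'a set \<Rightarrow> bool" where
  "is_halfspace_of g e H K \<longleftrightarrow> is_ghyperplane g e H \<and>
     (\<exists>U \<in> components (gspace g e - H). K = top_of_set (gspace g e) closure_of U)"

definition glocally_finite :: "geom \<Rightarrow> 'a::euclidean_space \<Rightarrow> 'a set set \<Rightarrow> bool" where
  "glocally_finite g e \<F> \<longleftrightarrow>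
     (\<forall>C. compact C \<and> C \<subseteq> gspace g e \<longrightarrow> finite {A \<in> \<F>. A \<inter> C \<noteq> {}})"

definition is_polyhedron :: "geom \<Rightarrow> 'a::euclidean_space \<Rightarrow> 'a set \<Rightarrow> bool" where
  "is_polyhedron g e P \<longleftrightarrow> P \<noteq> {} \<and>
     (\<exists>F :: ('a set \<times> 'a set) set.
        (\<forall>(H, K) \<in> F. is_halfspace_of g e H K) \<and>
        glocally_finite g e (fst ` F) \<and>
        P = gspace g e \<inter> \<Inter> (snd ` F))"

definition grelint :: "geom \<Rightarrow> 'a::euclidean_space \<Rightarrow> 'a set \<Rightarrow> 'a set" where
  "grelint g e C = top_of_set (ghull g e C) interior_of C"

definition gcodim :: "geom \<Rightarrow> 'a::euclidean_space \<Rightarrow> 'a set \<Rightarrow> nat" where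
  "gcodim g e C = gdim g TYPE('a) - gsdim g (ghull g e C)"

definition is_thick :: "geom \<Rightarrow> 'a::euclidean_space \<Rightarrow> 'a set \<Rightarrow> bool" where
  "is_thick g e P \<longleftrightarrow> top_of_set (gspace g e) interior_of P \<noteq> {}"

definition is_tessellation :: "geom \<Rightarrow> 'a::euclidean_space \<Rightarrow> 'a set set \<Rightarrow> bool" where
  "is_tessellation g e \<T> \<longleftrightarrow>
     (\<forall>T \<in> \<T>. is_polyhedron g e T \<and> is_thick g e T) \<and>
     \<Union> \<T> = gspace g e \<and>
     (\<forall>T \<in> \<T>. \<forall>T' \<in> \<T>. T \<noteq> T' \<longrightarrow>
        (top_of_set (gspace g e) interior_of T) \<inter> (top_of_set (gspace g e) interior_of T') = {})"

definition is_cell :: "geom \<Rightarrow> 'a::euclidean_space \<Rightarrow> 'a set set \<Rightarrow> 'a set \<Rightarrow> bool" where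
  "is_cell g e \<T> C \<longleftrightarrow> C \<noteq> {} \<and>
     (\<exists>\<S>. \<S> \<subseteq> \<T> \<and> \<S> \<noteq> {} \<and> C = \<Inter> \<S>) \<and>
     (\<forall>T' \<in> \<T>. C \<subseteq> T' \<or> grelint g e C \<inter> T' = {})"

definition is_side :: "geom \<Rightarrow> 'a::euclidean_space \<Rightarrow> 'a set set \<Rightarrow> 'a set \<Rightarrow> bool" where
  "is_side g e \<T> S \<longleftrightarrow> is_cell g e \<T> S \<and> gcodim g e S = 1"

end

theory Submission
  imports Defs
begin

(* Each model space X sits in the ambient Euclidean space, and its polyhedra are the traces X \<inter> C
   of closed convex sets C, which are cones for the sphere and the hyperboloid. Radial projection
   from the open cone over X onto X transports interiors, closures and dimensions between X and
   the ambient space, where convexity arguments are available.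

   A side S \<subseteq> T lies on the frontier of T: a tile other than T through an interior point of T
   would meet the interior of T, so S could only be T itself, which has codimension 0.
   Conversely, let x be a frontier point of T. By local finiteness, all tiles close to x contain x.
   Join an interior point y of T to a nearby point z outside T chosen off the finitely many
   lower-dimensional hulls of y with the intersections T \<inter> A of codimension at least 2. The last
   point of the segment in T lies in some T \<inter> A with x \<in> A, and the choice of z forces T \<inter> A to
   have codimension exactly 1. Such an intersection is a side: near a point of its relative
   interior the tiles T and A are separated by a hyperplane and cover a whole neighbourhood, so
   no third tile can reach it. *)

section \<open>Convexity and topology in the ambient space\<close>

lemma convex_norm_less_linear:
  fixes f :: "'a::real_normed_vector \<Rightarrow> 'b::real_normed_vector" and l :: "'a \<Rightarrow> real"
  assumes "linear f" "linear l"
  shows "convex {y. norm (f y) < l y}"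
proof (rule convexI, clarsimp)
  fix x y :: 'a and u v :: real
  assume x: "norm (f x) < l x" and y: "norm (f y) < l y" and uv: "0 \<le> u" "0 \<le> v" "u + v = 1"
  have "norm (f (u *\<^sub>R x + v *\<^sub>R y)) \<le> u * norm (f x) + v * norm (f y)"
    using uv norm_triangle_ineq[of "u *\<^sub>R f x" "v *\<^sub>R f y"]
    by (simp add: linear_add[OF assms(1)] linear_scale[OF assms(1)])
  also have "\<dots> < u * l x + v * l y"
  proof (cases "u = 0")
    case False
    then show ?thesis
      using uv x y by (intro add_less_le_mono mult_strict_left_mono mult_left_mono) auto
  qed (use uv y in simp)
  also have "\<dots> = l (u *\<^sub>R x + v *\<^sub>R y)"
    by (simp add: linear_add[OF assms(2)] linear_scale[OF assms(2)])
  finally show "norm (f (u *\<^sub>R x + v *\<^sub>R y)) < l (u *\<^sub>R x + v *\<^sub>R y)" .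
qed

lemma interior_cone_scaleR:
  fixes C :: "'a::euclidean_space set"
  assumes "cone C" "y \<in> interior C" "c > 0"
  shows "c *\<^sub>R y \<in> interior C"
proof -
  have "(*\<^sub>R) c ` C = C"
    using assms cone_iff[of C] by blast
  then show ?thesis
    using assms(2,3) interior_injective_linear_image[of "(*\<^sub>R) c" C]
    by (metis image_eqI inj_on_def linear_scaleR scaleR_cancel_left less_irrefl)
qed

lemma convex_contains_halfball:
  fixes C :: "'a::euclidean_space set"
  assumes "convex C" "q \<in> C" "a \<bullet> q < b" "p \<in> C" "a \<bullet> p = b"
    and "open V" "p \<in> V" "\<And>w. w \<in> V \<Longrightarrow> a \<bullet> w = b \<Longrightarrow> w \<in> C"
  obtains d where "d > 0" "\<And>w. dist w p < d \<Longrightarrow> a \<bullet> w \<le> b \<Longrightarrow> w \<in> C"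
proof -
  \<comment> \<open>project w from q onto the hyperplane: w lies on the segment from q to f w\<close>
  define lam where "lam w = (b - a \<bullet> w) / (b - a \<bullet> q)" for w
  define f where "f w = (1 / (1 - lam w)) *\<^sub>R (w - lam w *\<^sub>R q)" for w
  have "lam p = 0" "f p = p"
    using assms(5) by (simp_all add: lam_def f_def)
  have "continuous (at p) lam" "continuous (at p) f"
    unfolding lam_def f_def using \<open>lam p = 0\<close> assms(3)
    by (auto simp: lam_def intro!: continuous_intros)
  then have "\<forall>\<^sub>F w in at p. f w \<in> V \<and> lam w < 1"
    using \<open>lam p = 0\<close> \<open>f p = p\<close> assms(6,7)
    by (intro eventually_conj topological_tendstoD order_tendstoD(2)) (auto simp: continuous_at)
  then obtain d where "d > 0" and d: "\<And>w. w \<noteq> p \<Longrightarrow> dist w p < d \<Longrightarrow> f w \<in> V \<and> lam w < 1"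
    unfolding eventually_at by blast
  have "w \<in> C" if "dist w p < d" "a \<bullet> w \<le> b" "w \<noteq> p" for w
  proof -
    have fw: "f w \<in> V" "lam w < 1" "lam w \<ge> 0"
      using d that assms(3) by (auto simp: lam_def)
    have "a \<bullet> w - lam w * (a \<bullet> q) = b * (1 - lam w)"
      using assms(3) by (simp add: lam_def field_simps)
    then have "a \<bullet> f w = b"
      using fw(2) by (simp add: f_def inner_diff_right)
    then have "f w \<in> C"
      using assms(8) fw(1) by blast
    then have "(1 - lam w) *\<^sub>R f w + lam w *\<^sub>R q \<in> C"
      using convexD[OF assms(1) _ assms(2)] fw(2,3) by simp
    moreover have "w = (1 - lam w) *\<^sub>R f w + lam w *\<^sub>R q"
      using fw(2) by (simp add: f_def)
    ultimately show "w \<in> C"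
      by metis
  qed
  then show ?thesis
    using that \<open>d > 0\<close> assms(4) by blast
qed

lemma interior_Union_closed_empty:
  fixes \<M> :: "'a::euclidean_space set set"
  assumes "finite \<M>" "\<And>M. M \<in> \<M> \<Longrightarrow> closed M \<and> interior M = {}"
  shows "interior (\<Union>\<M>) = {}"
  using assms
proof (induction \<M> rule: finite_induct)
  case (insert M \<M>)
  then have "interior (\<Union>\<M> \<union> M) = interior (\<Union>\<M>)"
    by (intro interior_closed_Un_empty_interior closed_Union) auto
  then show ?case
    using insert by (simp add: Un_commute)
qed simp

lemma last_point_in_closed:
  fixes \<Gamma> :: "real set"
  assumes "closed \<Gamma>" "0 \<in> \<Gamma>" "\<Gamma> \<subseteq> {0..1}" "1 \<notin> \<Gamma>"
  obtains t where "t \<in> \<Gamma>" "t < 1" "\<And>s. t < s \<Longrightarrow> s \<notin> \<Gamma>"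
proof
  have "bdd_above \<Gamma>"
    using assms(3) by (intro bdd_aboveI[of _ 1]) auto
  then show "Sup \<Gamma> \<in> \<Gamma>"
    using closed_contains_Sup assms(1,2) by blast
  then have "Sup \<Gamma> \<le> 1" "Sup \<Gamma> \<noteq> 1"
    using assms(3,4) by auto
  then show "Sup \<Gamma> < 1"
    by simp
  show "s \<notin> \<Gamma>" if "Sup \<Gamma> < s" for s
    using that cSup_upper[OF _ \<open>bdd_above \<Gamma>\<close>, of s] by auto
qed

lemma interior_of_meets_cover:
  assumes "p \<in> X closure_of (X interior_of R)" "openin X N" "p \<in> N" "N \<subseteq> A \<union> B" "closedin X A"
  shows "X interior_of R \<inter> (X interior_of A \<union> X interior_of B) \<noteq> {}"
proof -
  define W where "W = X interior_of R \<inter> N"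
  have "openin X W" "W \<noteq> {}"
    using assms(1-3) by (auto simp: W_def in_closure_of)
  show ?thesis
  proof (cases "W \<subseteq> A")
    case True
    then show ?thesis
      using interior_of_maximal[OF True \<open>openin X W\<close>] \<open>W \<noteq> {}\<close> by (auto simp: W_def)
  next
    case False
    have "W - A \<subseteq> X interior_of B"
      using assms(4) by (intro interior_of_maximal openin_diff[OF \<open>openin X W\<close> assms(5)]) (auto simp: W_def)
    then show ?thesis
      using False by (auto simp: W_def)
  qed
qed

section \<open>The open cone over the model space\<close>

(* gcone g e is the open cone of positive multiples of the model space X (all of the ambient space
   in the Euclidean case), and gproj g e is its radial projection onto X. *)

fun gcone :: "geom \<Rightarrow> 'a::euclidean_space \<Rightarrow> 'a set" where
  "gcone Euclidean e = UNIV"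
| "gcone Spherical e = - {0}"
| "gcone Hyperbolic e = {y. lorentz e y y < 0 \<and> 0 < y \<bullet> e}"

fun gproj_factor :: "geom \<Rightarrow> 'a::euclidean_space \<Rightarrow> 'a \<Rightarrow> real" where
  "gproj_factor Euclidean e y = 1"
| "gproj_factor Spherical e y = 1 / norm y"
| "gproj_factor Hyperbolic e y = 1 / sqrt (- lorentz e y y)"

definition gproj :: "geom \<Rightarrow> 'a::euclidean_space \<Rightarrow> 'a \<Rightarrow> 'a" where
  "gproj g e y = gproj_factor g e y *\<^sub>R y"

lemma lorentz_scaleR: "lorentz e (c *\<^sub>R y) (c *\<^sub>R y) = c\<^sup>2 * lorentz e y y"
  by (simp add: lorentz_def power2_eq_square algebra_simps)

lemma open_gcone: "open (gcone g e)"
  by (cases g) (auto simp: lorentz_def intro!: open_Collect_conj open_Collect_less continuous_intros)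

lemma gspace_subset_gcone: "gspace g e \<subseteq> gcone g e"
  by (cases g) auto

lemma gproj_factor_pos: "y \<in> gcone g e \<Longrightarrow> gproj_factor g e y > 0"
  by (cases g) auto

lemma gproj_in_gspace: "y \<in> gcone g e \<Longrightarrow> gproj g e y \<in> gspace g e"
proof (cases g)
  case Hyperbolic
  assume "y \<in> gcone g e"
  then have "lorentz e y y < 0" "0 < y \<bullet> e"
    using Hyperbolic by auto
  then show ?thesis
    using Hyperbolic by (simp add: gproj_def lorentz_scaleR power_divide)
qed (auto simp: gproj_def)

lemma gproj_gspace [simp]: "y \<in> gspace g e \<Longrightarrow> gproj g e y = y"
  by (cases g) (auto simp: gproj_def)

lemma gproj_Euclidean [simp]: "gproj Euclidean e y = y"
  by (simp add: gproj_def)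

lemma continuous_on_gproj: "continuous_on (gcone g e) (gproj g e)"
  by (cases g) (auto simp: gproj_def lorentz_def intro!: continuous_intros)

lemma open_gcone_vimage_gproj: "open V \<Longrightarrow> open (gcone g e \<inter> gproj g e -` V)"
  by (metis Int_commute continuous_on_gproj continuous_on_open_vimage open_gcone)

lemma openin_gspace_lift:
  assumes "openin (top_of_set (gspace g e)) U"
  shows "open (gcone g e \<inter> gproj g e -` U)" and "U \<subseteq> gcone g e \<inter> gproj g e -` U"
proof -
  obtain V where "open V" "U = gspace g e \<inter> V"
    using assms by (auto simp: openin_open)
  moreover from this have "gcone g e \<inter> gproj g e -` U = gcone g e \<inter> gproj g e -` V"
    using gproj_in_gspace by blast
  ultimately show "open (gcone g e \<inter> gproj g e -` U)" "U \<subseteq> gcone g e \<inter> gproj g e -` U"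
    using open_gcone_vimage_gproj[of V g e] gspace_subset_gcone[of g e] by auto
qed

lemma gproj_near:
  assumes "x \<in> gspace g e" "r > 0"
  obtains \<rho> where "\<rho> > 0" "ball x \<rho> \<subseteq> gcone g e" "\<And>w. w \<in> ball x \<rho> \<Longrightarrow> dist x (gproj g e w) < r"
proof -
  have "x \<in> gcone g e"
    using assms(1) gspace_subset_gcone by blast
  then obtain \<rho>1 where "\<rho>1 > 0" "ball x \<rho>1 \<subseteq> gcone g e"
    using open_gcone open_contains_ball by blast
  moreover have "isCont (gproj g e) x"
    using continuous_on_eq_continuous_at[OF open_gcone] continuous_on_gproj \<open>x \<in> gcone g e\<close> by blast
  then obtain \<rho>2 where "\<rho>2 > 0" "\<And>w. dist w x < \<rho>2 \<Longrightarrow> dist (gproj g e w) x < r"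
    using assms unfolding continuous_at_eps_delta by fastforce
  ultimately show ?thesis
    by (intro that[of "min \<rho>1 \<rho>2"]) (auto simp: dist_commute)
qed

lemma zero_notin_gspace: "g \<noteq> Euclidean \<Longrightarrow> 0 \<notin> gspace g e"
  by (cases g) (auto simp: lorentz_def)

lemma closed_gspace:
  fixes e :: "'a::euclidean_space"
  assumes "norm e = 1"
  shows "closed (gspace g e)"
proof (cases g)
  case Hyperbolic
  have "x \<bullet> e \<noteq> 0" if "lorentz e x x = -1" for x
  proof
    assume "x \<bullet> e = 0"
    then have "lorentz e x x = x \<bullet> x"
      by (simp add: lorentz_def)
    then show False
      using that by (metis inner_ge_zero neg_0_le_iff_le not_one_le_zero)
  qed
  then have "gspace Hyperbolic e = {x. lorentz e x x = -1} \<inter> {x. 0 \<le> x \<bullet> e}"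
    by force
  moreover have "closed {x. lorentz e x x = -1}" "closed {x. 0 \<le> x \<bullet> e}"
    unfolding lorentz_def by (intro closed_Collect_eq closed_Collect_le continuous_intros)+
  ultimately show ?thesis
    using Hyperbolic by (metis closed_Int)
qed auto

lemma gproj_mem_iff:
  assumes "g \<noteq> Euclidean \<longrightarrow> cone C" "y \<in> gcone g e"
  shows "gproj g e y \<in> C \<longleftrightarrow> y \<in> C"
proof (cases "g = Euclidean")
  case False
  then have "cone C"
    using assms(1) by blast
  moreover have pos: "gproj_factor g e y > 0"
    using gproj_factor_pos assms(2) by blast
  moreover have "y = (1 / gproj_factor g e y) *\<^sub>R gproj g e y"
    using pos by (simp add: gproj_def)
  ultimately show ?thesis
    unfolding gproj_def using mem_cone[of C] by (metis less_imp_le zero_le_divide_1_iff)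
qed simp

lemma inner_gproj:
  assumes "g \<noteq> Euclidean \<longrightarrow> b = 0" "y \<in> gcone g e"
  shows "b < a \<bullet> gproj g e y \<longleftrightarrow> b < a \<bullet> y"
    and "a \<bullet> gproj g e y = b \<longleftrightarrow> a \<bullet> y = b"
proof -
  have "gproj_factor g e y > 0"
    using gproj_factor_pos assms(2) by blast
  then show "b < a \<bullet> gproj g e y \<longleftrightarrow> b < a \<bullet> y" "a \<bullet> gproj g e y = b \<longleftrightarrow> a \<bullet> y = b"
    using assms(1) by (cases "g = Euclidean"; simp add: gproj_def zero_less_mult_iff)+
qed

lemma openin_gspace_avoids_nowhere_dense_cone:
  assumes "openin (top_of_set (gspace g e)) U" "U \<noteq> {}"
    and "interior M = {}" "g \<noteq> Euclidean \<longrightarrow> cone M"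
  obtains z where "z \<in> U" "z \<notin> M"
proof -
  let ?W = "gcone g e \<inter> gproj g e -` U"
  have "?W \<noteq> {}"
    using assms(2) openin_gspace_lift(2)[OF assms(1)] by blast
  then have "\<not> ?W \<subseteq> M"
    using assms(3) openin_gspace_lift(1)[OF assms(1)] interior_maximal by blast
  then obtain w where "w \<in> gcone g e" "gproj g e w \<in> U" "w \<notin> M"
    by blast
  then show ?thesis
    using that gproj_mem_iff[OF assms(4)] by blast
qed

lemma hyperbolic_gcone_eq:
  fixes e :: "'a::euclidean_space"
  assumes "norm e = 1"
  shows "gcone Hyperbolic e = {y. norm (y - (y \<bullet> e) *\<^sub>R e) < y \<bullet> e}"
proof -
  have "e \<bullet> e = 1"
    using assms by (simp add: dot_square_norm)
  have "lorentz e y y < 0 \<and> 0 < y \<bullet> e \<longleftrightarrow> norm (y - (y \<bullet> e) *\<^sub>R e) < y \<bullet> e" for y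
  proof -
    define n where "n = norm (y - (y \<bullet> e) *\<^sub>R e)"
    have n2: "n\<^sup>2 = lorentz e y y + (y \<bullet> e)\<^sup>2"
      unfolding n_def power2_norm_eq_inner using \<open>e \<bullet> e = 1\<close>
      by (simp add: inner_diff_left inner_diff_right inner_commute lorentz_def power2_eq_square)
    have "n \<ge> 0"
      by (simp add: n_def)
    show ?thesis
      unfolding n_def[symmetric]
    proof
      assume "lorentz e y y < 0 \<and> 0 < y \<bullet> e"
      then show "n < y \<bullet> e"
        using n2 power2_less_imp_less[of n "y \<bullet> e"] by simp
    next
      assume "n < y \<bullet> e"
      moreover from this have "n\<^sup>2 < (y \<bullet> e)\<^sup>2"
        using \<open>n \<ge> 0\<close> by (simp add: power_strict_mono)
      ultimately show "lorentz e y y < 0 \<and> 0 < y \<bullet> e"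
        using n2 \<open>n \<ge> 0\<close> by simp
    qed
  qed
  then show ?thesis
    unfolding gcone.simps by blast
qed

lemma convex_gcone_halfspace_gt:
  fixes e :: "'a::euclidean_space"
  assumes "norm e = 1" "g \<noteq> Euclidean \<longrightarrow> b = 0"
  shows "convex (gcone g e \<inter> {y. b < a \<bullet> y})"
proof (cases g)
  case Spherical
  then have "gcone g e \<inter> {y. b < a \<bullet> y} = {y. b < a \<bullet> y}"
    using assms(2) by auto
  then show ?thesis
    by (simp add: convex_halfspace_gt)
next
  case Hyperbolic
  have "convex {y. norm (y - (y \<bullet> e) *\<^sub>R e) < y \<bullet> e}"
    by (intro convex_norm_less_linear) (auto simp: linear_iff algebra_simps inner_add_left)
  then show ?thesis
    using Hyperbolic hyperbolic_gcone_eq[OF assms(1)] by (simp add: convex_Int convex_halfspace_gt)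
qed (simp add: convex_halfspace_gt)

section \<open>Hyperplanes, half-spaces and polyhedra\<close>

lemma dim_gspace_subset_ge1:
  assumes "g \<noteq> Euclidean" "S \<subseteq> gspace g e" "S \<noteq> {}"
  shows "dim S \<ge> 1"
  using assms zero_notin_gspace dim_eq_0[of S] by fastforce

lemma ghyperplane_eq:
  fixes e :: "'a::euclidean_space"
  assumes "is_ghyperplane g e H"
  obtains a b where "a \<noteq> 0" "g \<noteq> Euclidean \<longrightarrow> b = 0" "H = gspace g e \<inter> {y. a \<bullet> y = b}"
proof (cases "g = Euclidean")
  case True
  then have "H \<noteq> {}" "affine H" "nat (aff_dim H) + 1 = DIM('a)"
    using assms by (auto simp: is_ghyperplane_def is_gsubspace_def gsdim_def)
  then have "aff_dim H = int DIM('a) - 1"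
    using aff_dim_negative_iff[of H] by linarith
  then obtain a b where "a \<noteq> 0" "affine hull H = {x. a \<bullet> x = b}"
    using aff_dim_eq_hyperplane[of H] by auto
  then show ?thesis
    using that True \<open>affine H\<close> by (metis affine_hull_eq gspace.simps(1) inf_top.left_neutral)
next
  case False
  then obtain L where L: "H \<noteq> {}" "subspace L" "H = gspace g e \<inter> L"
    "dim (span H) - 1 + 1 = DIM('a) - 1"
    using assms by (cases g) (auto simp: is_ghyperplane_def is_gsubspace_def gsdim_def)
  then have "dim H = DIM('a) - 1"
    using dim_gspace_subset_ge1[OF False, of H e] by (simp add: dim_span)
  then obtain a where a: "a \<noteq> 0" "span H = {x. a \<bullet> x = 0}"
    using dim_eq_hyperplane[of H] by blast
  have "H = gspace g e \<inter> span H"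
    using L span_minimal[of H L] span_superset[of H] by blast
  then show ?thesis
    using that a False by simp
qed

lemma gspace_halfspace_gt_eq_image:
  assumes "g \<noteq> Euclidean \<longrightarrow> b = 0"
  shows "gspace g e \<inter> {y. b < a \<bullet> y} = gproj g e ` (gcone g e \<inter> {y. b < a \<bullet> y})"
proof
  show "gspace g e \<inter> {y. b < a \<bullet> y} \<subseteq> gproj g e ` (gcone g e \<inter> {y. b < a \<bullet> y})"
  proof
    fix y
    assume "y \<in> gspace g e \<inter> {y. b < a \<bullet> y}"
    then show "y \<in> gproj g e ` (gcone g e \<inter> {y. b < a \<bullet> y})"
      using gspace_subset_gcone[of g e] by (intro image_eqI[of _ _ y]) auto
  qed
  show "gproj g e ` (gcone g e \<inter> {y. b < a \<bullet> y}) \<subseteq> gspace g e \<inter> {y. b < a \<bullet> y}"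
    using gproj_in_gspace inner_gproj(1)[OF assms] by blast
qed

lemma connected_gspace_halfspace_gt:
  fixes e :: "'a::euclidean_space"
  assumes "norm e = 1" "g \<noteq> Euclidean \<longrightarrow> b = 0"
  shows "connected (gspace g e \<inter> {y. b < a \<bullet> y})"
  unfolding gspace_halfspace_gt_eq_image[OF assms(2)]
  by (intro connected_continuous_image continuous_on_subset[OF continuous_on_gproj]
      convex_connected convex_gcone_halfspace_gt assms) auto

lemma closure_of_gspace_halfspace_gt:
  assumes "a \<noteq> 0" "g \<noteq> Euclidean \<longrightarrow> b = 0"
  shows "top_of_set (gspace g e) closure_of (gspace g e \<inter> {y. b < a \<bullet> y})
          = gspace g e \<inter> {y. b \<le> a \<bullet> y}"
proof
  show "top_of_set (gspace g e) closure_of (gspace g e \<inter> {y. b < a \<bullet> y})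
          \<subseteq> gspace g e \<inter> {y. b \<le> a \<bullet> y}"
    by (intro closure_of_minimal closedin_closed_Int closed_halfspace_ge) auto
  show "gspace g e \<inter> {y. b \<le> a \<bullet> y}
          \<subseteq> top_of_set (gspace g e) closure_of (gspace g e \<inter> {y. b < a \<bullet> y})"
  proof (clarsimp simp: in_closure_of)
    fix y0 U
    assume y0: "y0 \<in> gspace g e" "b \<le> a \<bullet> y0" and U: "y0 \<in> U" "openin (top_of_set (gspace g e)) U"
    obtain \<epsilon> where "\<epsilon> > 0" and \<epsilon>: "ball y0 \<epsilon> \<subseteq> gcone g e \<inter> gproj g e -` U"
      using openin_gspace_lift[OF U(2)] U(1) open_contains_ball by blast
    define w where "w = y0 + (\<epsilon> / (2 * norm a)) *\<^sub>R a"
    have "dist y0 w < \<epsilon>"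
      using assms(1) \<open>\<epsilon> > 0\<close> by (simp add: w_def dist_norm)
    then have w: "w \<in> gcone g e" "gproj g e w \<in> U"
      using \<epsilon> by auto
    have "a \<bullet> w = a \<bullet> y0 + \<epsilon> * norm a / 2"
      using assms(1) by (simp add: w_def inner_add_right dot_square_norm power2_eq_square)
    moreover have "\<epsilon> * norm a / 2 > 0"
      using assms(1) \<open>\<epsilon> > 0\<close> by simp
    ultimately have "b < a \<bullet> w"
      using y0(2) by linarith
    then show "\<exists>y. y \<in> gspace g e \<and> b < a \<bullet> y \<and> y \<in> U"
      using w gproj_in_gspace inner_gproj(1)[OF assms(2) w(1)] by blast
  qed
qed

lemma components_gspace_minus_hyperplane:
  fixes e :: "'a::euclidean_space"
  assumes "norm e = 1" "g \<noteq> Euclidean \<longrightarrow> b = 0"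
    and U: "U \<in> components (gspace g e - {y. a \<bullet> y = b})" "u \<in> U" "b < a \<bullet> u"
  shows "U = gspace g e \<inter> {y. b < a \<bullet> y}"
proof
  have "connected U" "U \<subseteq> gspace g e - {y. a \<bullet> y = b}"
    using in_components_connected[OF U(1)] in_components_subset[OF U(1)] by auto
  then show "U \<subseteq> gspace g e \<inter> {y. b < a \<bullet> y}"
    using connected_ivt_hyperplane[of U _ u a b] U(2,3) by fastforce
  then show "gspace g e \<inter> {y. b < a \<bullet> y} \<subseteq> U"
    using components_maximal[OF U(1) connected_gspace_halfspace_gt[OF assms(1,2)]] U(2) by blast
qed

lemma ghalfspace_eq:
  fixes e :: "'a::euclidean_space"
  assumes "norm e = 1" "is_halfspace_of g e H K"
  obtains a b where "a \<noteq> 0" "g \<noteq> Euclidean \<longrightarrow> b = 0" "K = gspace g e \<inter> {y. b \<le> a \<bullet> y}"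
proof -
  obtain U where U: "U \<in> components (gspace g e - H)" "K = top_of_set (gspace g e) closure_of U"
    and "is_ghyperplane g e H"
    using assms(2) by (auto simp: is_halfspace_of_def)
  then obtain a b where ab: "a \<noteq> 0" "g \<noteq> Euclidean \<longrightarrow> b = 0" "H = gspace g e \<inter> {y. a \<bullet> y = b}"
    using ghyperplane_eq by blast
  have "gspace g e - H = gspace g e - {y. a \<bullet> y = b}"
    using ab(3) by blast
  then have U': "U \<in> components (gspace g e - {y. a \<bullet> y = b})"
    using U(1) by simp
  obtain u where u: "u \<in> U" "a \<bullet> u \<noteq> b"
    using in_components_nonempty[OF U'] in_components_subset[OF U'] by blast
  show ?thesis
  proof (cases "b < a \<bullet> u")
    case True
    then show ?thesis
      using that[OF ab(1,2)] U(2) closure_of_gspace_halfspace_gt[OF ab(1,2)]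
        components_gspace_minus_hyperplane[OF assms(1) ab(2) U' u(1)] by simp
  next
    case False
    then have "-b < (-a) \<bullet> u" "U \<in> components (gspace g e - {y. (-a) \<bullet> y = -b})"
      using u(2) U' by auto
    moreover have "-a \<noteq> 0" "g \<noteq> Euclidean \<longrightarrow> -b = 0"
      using ab by auto
    ultimately show ?thesis
      using that[of "-a" "-b"] U(2) closure_of_gspace_halfspace_gt[of "-a" g "-b" e]
        components_gspace_minus_hyperplane[OF assms(1), of g "-b" U "-a" u] u(1) by simp
  qed
qed

(* Polyhedra are the traces on X of these sets; the cone condition makes membership invariant
   under gproj. *)
definition model_convex :: "geom \<Rightarrow> 'a::euclidean_space set \<Rightarrow> bool" where
  "model_convex g C \<longleftrightarrow> closed C \<and> convex C \<and> (g \<noteq> Euclidean \<longrightarrow> cone C)"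

lemma model_convex_halfspace_ge: "g \<noteq> Euclidean \<longrightarrow> b = 0 \<Longrightarrow> model_convex g {y. b \<le> a \<bullet> y}"
  by (auto simp: model_convex_def closed_halfspace_ge convex_halfspace_ge cone_def)

lemma model_convex_Inter: "(\<And>C. C \<in> \<C> \<Longrightarrow> model_convex g C) \<Longrightarrow> model_convex g (\<Inter>\<C>)"
  by (auto simp: model_convex_def intro!: closed_Inter convex_Inter cone_Inter)

lemma model_convex_Int: "model_convex g C \<Longrightarrow> model_convex g D \<Longrightarrow> model_convex g (C \<inter> D)"
  using model_convex_Inter[of "{C, D}"] by auto

lemma polyhedron_eq_model_convex:
  fixes e :: "'a::euclidean_space"
  assumes "norm e = 1" "is_polyhedron g e P"
  obtains C where "model_convex g C" "P = gspace g e \<inter> C"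
proof -
  obtain F :: "('a set \<times> 'a set) set" where F: "\<forall>(H, K) \<in> F. is_halfspace_of g e H K"
    "P = gspace g e \<inter> \<Inter> (snd ` F)"
    using assms(2) by (auto simp: is_polyhedron_def)
  have "\<exists>C. model_convex g C \<and> K = gspace g e \<inter> C" if "K \<in> snd ` F" for K
  proof -
    obtain H where "is_halfspace_of g e H K"
      using F(1) \<open>K \<in> snd ` F\<close> by auto
    then show ?thesis
      using ghalfspace_eq[OF assms(1)] model_convex_halfspace_ge by metis
  qed
  then obtain CK where CK: "\<And>K. K \<in> snd ` F \<Longrightarrow> model_convex g (CK K) \<and> K = gspace g e \<inter> CK K"
    by metis
  then have "P = gspace g e \<inter> \<Inter> (CK ` snd ` F)"
    using F(2) by blast
  then show ?thesis
    using that CK model_convex_Inter[of "CK ` snd ` F" g] by blast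
qed

section \<open>Interiors and codimension of polyhedra\<close>

abbreviation ginterior :: "geom \<Rightarrow> 'a::euclidean_space \<Rightarrow> 'a set \<Rightarrow> 'a set" where
  "ginterior g e S \<equiv> top_of_set (gspace g e) interior_of S"

abbreviation gclosure :: "geom \<Rightarrow> 'a::euclidean_space \<Rightarrow> 'a set \<Rightarrow> 'a set" where
  "gclosure g e S \<equiv> top_of_set (gspace g e) closure_of S"

lemma ginterior_subset_interior:
  assumes "model_convex g C"
  shows "ginterior g e (gspace g e \<inter> C) \<subseteq> interior C"
proof -
  let ?W = "gcone g e \<inter> gproj g e -` ginterior g e (gspace g e \<inter> C)"
  have "?W \<subseteq> C"
    using assms gproj_mem_iff[of g C] interior_of_subset
    by (fastforce simp: model_convex_def)
  then show ?thesis
    using openin_gspace_lift[OF openin_interior_of] interior_maximal by blast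
qed

lemma gproj_interior:
  assumes "model_convex g C" "y \<in> gcone g e" "y \<in> interior C"
  shows "gproj g e y \<in> ginterior g e (gspace g e \<inter> C)"
proof -
  have "gproj g e y \<in> interior C"
    using assms gproj_factor_pos[OF assms(2)] interior_cone_scaleR[of C y]
    by (cases "g = Euclidean") (auto simp: model_convex_def gproj_def)
  moreover have "gspace g e \<inter> interior C \<subseteq> ginterior g e (gspace g e \<inter> C)"
    using interior_subset[of C] by (intro interior_of_maximal) (auto simp: openin_open_Int)
  ultimately show ?thesis
    using gproj_in_gspace[OF assms(2)] by blast
qed

lemma model_convex_closure_interior:
  "model_convex g C \<Longrightarrow> interior C \<noteq> {} \<Longrightarrow> closure (interior C) = C"
  by (simp add: model_convex_def convex_closure_interior)

lemma ginterior_nonempty_iff: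
  assumes "model_convex g C" "gspace g e \<inter> C \<noteq> {}"
  shows "ginterior g e (gspace g e \<inter> C) \<noteq> {} \<longleftrightarrow> interior C \<noteq> {}"
proof
  show "ginterior g e (gspace g e \<inter> C) \<noteq> {} \<Longrightarrow> interior C \<noteq> {}"
    using ginterior_subset_interior[OF assms(1)] by blast
  assume "interior C \<noteq> {}"
  then have "gspace g e \<inter> C \<subseteq> closure (interior C)"
    using model_convex_closure_interior[OF assms(1)] by blast
  then have "gcone g e \<inter> closure (interior C) \<noteq> {}"
    using assms(2) gspace_subset_gcone by blast
  then obtain w where "w \<in> gcone g e" "w \<in> interior C"
    using open_Int_closure_eq_empty[OF open_gcone] by blast
  then show "ginterior g e (gspace g e \<inter> C) \<noteq> {}"
    using gproj_interior[OF assms(1)] by blast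
qed

lemma subset_gclosure_ginterior:
  assumes "model_convex g C" "ginterior g e (gspace g e \<inter> C) \<noteq> {}"
  shows "gspace g e \<inter> C \<subseteq> gclosure g e (ginterior g e (gspace g e \<inter> C))"
proof (clarsimp simp: in_closure_of)
  fix z U
  assume z: "z \<in> gspace g e" "z \<in> C" and U: "z \<in> U" "openin (top_of_set (gspace g e)) U"
  have "z \<in> closure (interior C)"
    using assms ginterior_subset_interior model_convex_closure_interior z(2) by blast
  moreover have "z \<in> gcone g e \<inter> gproj g e -` U"
    using openin_gspace_lift(2)[OF U(2)] U(1) by blast
  ultimately obtain w where w: "w \<in> gcone g e" "gproj g e w \<in> U" "w \<in> interior C"
    using open_Int_closure_eq_empty[OF openin_gspace_lift(1)[OF U(2)]] by blast
  then show "\<exists>y. y \<in> ginterior g e (gspace g e \<inter> C) \<and> y \<in> U"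
    using gproj_interior[OF assms(1)] by blast
qed

lemma gcodim_eq:
  fixes S :: "'a::euclidean_space set"
  assumes "S \<subseteq> gspace g e" "S \<noteq> {}"
  shows "gcodim g e S = (if g = Euclidean then DIM('a) - nat (aff_dim S) else DIM('a) - dim S)"
proof (cases "g = Euclidean")
  case False
  have "span (gspace g e \<inter> span S) = span S"
    using assms(1) span_superset[of S] by (intro subset_antisym span_minimal span_mono) auto
  then have "dim (gspace g e \<inter> span S) = dim S"
    by (metis dim_span)
  moreover have "dim S \<ge> 1"
    using dim_gspace_subset_ge1[OF False assms] .
  moreover have "gdim g TYPE('a) = DIM('a) - 1"
    using False by (cases g) auto
  ultimately show ?thesis
    using False by (simp add: gcodim_def gsdim_def ghull_def)
qed (simp add: gcodim_def gsdim_def ghull_def)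

lemma gcodim_pos_if_subset_hyperplane:
  fixes S :: "'a::euclidean_space set"
  assumes "S \<subseteq> gspace g e" "S \<noteq> {}" "a \<noteq> 0" "g \<noteq> Euclidean \<longrightarrow> b = 0"
    and "S \<subseteq> {x. a \<bullet> x = b}"
  shows "gcodim g e S \<ge> 1"
proof (cases "g = Euclidean")
  case True
  have "aff_dim S \<le> int DIM('a) - 1"
    using aff_dim_subset[OF assms(5)] assms(3) by simp
  moreover have "aff_dim S \<ge> 0"
    using assms(2) aff_dim_negative_iff[of S] by linarith
  ultimately
  show ?thesis
    using True gcodim_eq[OF assms(1,2)] by (simp add: nat_less_iff)
next
  case False
  have "dim S \<le> DIM('a) - 1"
    using dim_subset[OF assms(5)] assms(4) False dim_hyperplane[OF assms(3)] by auto
  then show ?thesis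
    using False gcodim_eq[OF assms(1,2)] dim_gspace_subset_ge1[OF False assms(1,2)] by simp
qed

lemma ginterior_nonempty_if_gcodim_eq_0:
  assumes "model_convex g C" "gspace g e \<inter> C \<noteq> {}" "gcodim g e (gspace g e \<inter> C) = 0"
  shows "ginterior g e (gspace g e \<inter> C) \<noteq> {}"
proof
  assume "ginterior g e (gspace g e \<inter> C) = {}"
  then have "interior C = {}"
    using ginterior_nonempty_iff[OF assms(1,2)] by blast
  then obtain a b where ab: "a \<noteq> 0" "C \<subseteq> {x. a \<bullet> x = b}"
    using empty_interior_subset_hyperplane assms(1) model_convex_def by metis
  have "g \<noteq> Euclidean \<longrightarrow> b = 0"
    using assms(1,2) ab(2) cone_contains_0[of C] by (auto simp: model_convex_def)
  then show False
    using gcodim_pos_if_subset_hyperplane[of "gspace g e \<inter> C" g e a b] assms(2,3) ab by auto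
qed

lemma gcodim_eq_0_if_ginterior_nonempty:
  fixes S :: "'a::euclidean_space set"
  assumes "S \<subseteq> gspace g e" "ginterior g e S \<noteq> {}"
  shows "gcodim g e S = 0"
proof (cases "g = Euclidean")
  case True
  then have "aff_dim S = DIM('a)" "S \<noteq> {}"
    using assms(2) aff_dim_nonempty_interior interior_subset by auto
  then show ?thesis
    using True gcodim_eq[OF assms(1)] by simp
next
  case False
  let ?W = "gcone g e \<inter> gproj g e -` ginterior g e S"
  have "?W \<subseteq> span S"
    using gproj_mem_iff[of g "span S"] interior_of_subset[of _ S] span_superset[of S]
    by (force simp: subspace_imp_cone)
  moreover have "?W \<noteq> {}" "open ?W"
    using assms(2) openin_gspace_lift[OF openin_interior_of, of g e S] by auto
  then have "dim ?W = DIM('a)"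
    using dim_openin[where S = ?W and T = UNIV] by simp
  ultimately have "dim S \<ge> DIM('a)"
    by (metis dim_span dim_subset)
  then show ?thesis
    using False gcodim_eq[OF assms(1)] assms(2) interior_of_subset[of _ S] by fastforce
qed

lemma ghull_eq_hyperplane:
  fixes S :: "'a::euclidean_space set"
  assumes "S \<subseteq> gspace g e" "S \<noteq> {}" "gcodim g e S = 1" "a \<noteq> 0"
    and "g \<noteq> Euclidean \<longrightarrow> b = 0" "S \<subseteq> {x. a \<bullet> x = b}"
  shows "ghull g e S = gspace g e \<inter> {x. a \<bullet> x = b}"
proof (cases "g = Euclidean")
  case True
  have "aff_dim S \<ge> 0"
    using assms(2) aff_dim_negative_iff[of S] by linarith
  moreover have "DIM('a) - nat (aff_dim S) = 1"
    using assms(3) True gcodim_eq[OF assms(1,2)] by simp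
  ultimately have "aff_dim S = int DIM('a) - 1"
    by linarith
  moreover have "affine hull S \<subseteq> {x. a \<bullet> x = b}"
    using assms(6) by (intro hull_minimal affine_hyperplane)
  ultimately have "affine hull S = {x. a \<bullet> x = b}"
    using affine_dim_equal[OF affine_affine_hull affine_hyperplane, of S a b] assms(2,4) by simp
  then show ?thesis
    using True by (simp add: ghull_def)
next
  case False
  have "dim S = DIM('a) - 1"
    using assms(3) False gcodim_eq[OF assms(1,2)] dim_subset_UNIV[of S]
      dim_gspace_subset_ge1[OF False assms(1,2)] by simp
  moreover have "span S \<subseteq> {x. a \<bullet> x = 0}"
    using assms(5,6) False by (intro span_minimal subspace_hyperplane) auto
  ultimately have "span S = {x. a \<bullet> x = 0}"
    using subspace_dim_equal[OF subspace_span subspace_hyperplane, of S a] dim_hyperplane[OF assms(4)]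
    by simp
  then show ?thesis
    using False assms(5) by (simp add: ghull_def)
qed

(* The ambient counterpart of ghull: ghull g e S = gspace g e \<inter> model_hull g S. *)
definition model_hull :: "geom \<Rightarrow> 'a::euclidean_space set \<Rightarrow> 'a set" where
  "model_hull g S = (if g = Euclidean then affine hull S else span S)"

lemma model_hull_superset: "S \<subseteq> model_hull g S"
  by (simp add: model_hull_def hull_subset span_superset)

lemma closed_model_hull: "closed (model_hull g S)"
  by (simp add: model_hull_def)

lemma cone_model_hull: "g \<noteq> Euclidean \<Longrightarrow> cone (model_hull g S)"
  by (simp add: model_hull_def subspace_imp_cone)

lemma model_hull_affine_comb:
  "x \<in> model_hull g S \<Longrightarrow> y \<in> model_hull g S \<Longrightarrow> (1 - u) *\<^sub>R x + u *\<^sub>R y \<in> model_hull g S"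
  using affine_affine_hull[of S] by (auto simp: model_hull_def affine_alt span_add span_mul)

lemma interior_model_hull_insert:
  fixes S :: "'a::euclidean_space set"
  assumes "S \<subseteq> gspace g e" "S \<noteq> {}" "gcodim g e S \<ge> 2"
  shows "interior (model_hull g (insert y S)) = {}"
proof (cases "g = Euclidean")
  case True
  have "aff_dim S \<ge> 0"
    using assms(2) aff_dim_negative_iff[of S] by linarith
  moreover have "DIM('a) - nat (aff_dim S) \<ge> 2"
    using assms(3) True gcodim_eq[OF assms(1,2)] by simp
  ultimately have "aff_dim (insert y S) < DIM('a)"
    using aff_dim_insert[of y S] by (simp split: if_splits)
  then show ?thesis
    using True low_dim_interior[of "affine hull (insert y S)"] by (simp add: model_hull_def)
next
  case False
  have "dim S + 2 \<le> DIM('a)"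
    using assms(3) False gcodim_eq[OF assms(1,2)] dim_gspace_subset_ge1[OF False assms(1,2)] by simp
  then have "dim (insert y S) < DIM('a)"
    using dim_insert[of y S] by (simp split: if_splits)
  then show ?thesis
    using False empty_interior_lowdim[of "span (insert y S)"] by (simp add: model_hull_def)
qed

lemma gproj_segment_in_model_hull:
  assumes "t > 0" "(1 - t) *\<^sub>R y + t *\<^sub>R z \<in> gcone g e"
    and "gproj g e ((1 - t) *\<^sub>R y + t *\<^sub>R z) \<in> S"
  shows "z \<in> model_hull g (insert y S)"
proof -
  let ?c = "(1 - t) *\<^sub>R y + t *\<^sub>R z"
  have "gproj g e ?c \<in> model_hull g (insert y S)"
    using assms(3) model_hull_superset by blast
  then have "?c \<in> model_hull g (insert y S)"
    using gproj_mem_iff[OF _ assms(2)] cone_model_hull by blast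
  then have "(1 - 1 / t) *\<^sub>R y + (1 / t) *\<^sub>R ?c \<in> model_hull g (insert y S)"
    using model_hull_superset by (blast intro: model_hull_affine_comb)
  moreover have "(1 - 1 / t) *\<^sub>R y + (1 / t) *\<^sub>R ?c = z"
    using assms(1) by (simp add: algebra_simps)
  ultimately show ?thesis
    by simp
qed

section \<open>Two polyhedra meeting in codimension one\<close>

lemma grelint_hyperplane_lift:
  assumes "p \<in> grelint g e S" "ghull g e S = gspace g e \<inter> {x. a \<bullet> x = b}"
    and "g \<noteq> Euclidean \<longrightarrow> b = 0"
  obtains W where "open W" "p \<in> W" "\<And>w. w \<in> W \<Longrightarrow> a \<bullet> w = b \<Longrightarrow> w \<in> gcone g e \<and> gproj g e w \<in> S"
proof -
  obtain U where U: "openin (top_of_set (gspace g e \<inter> {x. a \<bullet> x = b})) U" "p \<in> U" "U \<subseteq> S"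
    using assms(1,2) unfolding grelint_def interior_of_def by auto
  obtain V where V: "open V" "U = gspace g e \<inter> {x. a \<bullet> x = b} \<inter> V"
    using U(1) by (auto simp: openin_open)
  define W where "W = gcone g e \<inter> gproj g e -` V"
  have "open W" "p \<in> W"
    using U(2) V gspace_subset_gcone[of g e] open_gcone_vimage_gproj[OF V(1)] by (auto simp: W_def)
  moreover have "w \<in> gcone g e \<and> gproj g e w \<in> S" if "w \<in> W" "a \<bullet> w = b" for w
  proof -
    have "w \<in> gcone g e" "gproj g e w \<in> V"
      using that(1) by (auto simp: W_def)
    moreover from this have "a \<bullet> gproj g e w = b"
      using inner_gproj(2)[OF assms(3)] that(2) by blast
    ultimately show ?thesis
      using V(2) U(3) gproj_in_gspace[of w g e] by blast
  qed
  ultimately show ?thesis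
    using that by blast
qed

lemma model_convex_separation:
  assumes C: "model_convex g C" "ginterior g e (gspace g e \<inter> C) \<noteq> {}"
    and D: "model_convex g D" "ginterior g e (gspace g e \<inter> D) \<noteq> {}"
    and disj: "ginterior g e (gspace g e \<inter> C) \<inter> ginterior g e (gspace g e \<inter> D) = {}"
    and meet: "gspace g e \<inter> C \<inter> D \<noteq> {}"
  obtains a b where "a \<noteq> 0" "g \<noteq> Euclidean \<longrightarrow> b = 0"
    "\<forall>x\<in>C. a \<bullet> x \<le> b" "\<forall>x\<in>D. b \<le> a \<bullet> x"
proof -
  have intC: "interior C \<noteq> {}" and intD: "interior D \<noteq> {}"
    using C D ginterior_subset_interior by blast+
  have "interior (C \<inter> D) = {}"
  proof (rule ccontr)
    assume "interior (C \<inter> D) \<noteq> {}"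
    then have "ginterior g e (gspace g e \<inter> (C \<inter> D)) \<noteq> {}"
      using ginterior_nonempty_iff[OF model_convex_Int[OF C(1) D(1)]] meet by (simp add: Int_assoc)
    moreover have "ginterior g e (gspace g e \<inter> (C \<inter> D))
        \<subseteq> ginterior g e (gspace g e \<inter> C) \<inter> ginterior g e (gspace g e \<inter> D)"
      by (auto intro: interior_of_mono[THEN subsetD])
    ultimately show False
      using disj by blast
  qed
  then have "interior C \<inter> closure (interior D) = {}"
    by (simp add: open_Int_closure_eq_empty)
  then have "interior C \<inter> D = {}"
    using model_convex_closure_interior[OF D(1) intD] by simp
  then obtain a b where ab: "a \<noteq> 0" "\<forall>x\<in>interior C. a \<bullet> x \<le> b" "\<forall>x\<in>D. b \<le> a \<bullet> x"
    using separating_hyperplane_sets[of "interior C" D] C(1) D(1) meet intC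
    by (auto simp: model_convex_def convex_interior)
  have "closure (interior C) \<subseteq> {x. a \<bullet> x \<le> b}"
    using ab(2) by (intro closure_minimal closed_halfspace_le) auto
  then have "\<forall>x\<in>C. a \<bullet> x \<le> b"
    using model_convex_closure_interior[OF C(1) intC] by auto
  moreover have "g \<noteq> Euclidean \<longrightarrow> b = 0"
  proof
    assume "g \<noteq> Euclidean"
    then have "0 \<in> C \<inter> D"
      using C(1) D(1) meet cone_contains_0 by (auto simp: model_convex_def)
    then show "b = 0"
      using calculation ab(3) by force
  qed
  ultimately show ?thesis
    using that ab by blast
qed

lemma model_convex_interior_Un:
  assumes C: "model_convex g C" "ginterior g e (gspace g e \<inter> C) \<noteq> {}"
    and D: "model_convex g D" "ginterior g e (gspace g e \<inter> D) \<noteq> {}"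
    and disj: "ginterior g e (gspace g e \<inter> C) \<inter> ginterior g e (gspace g e \<inter> D) = {}"
    and codim: "gcodim g e (gspace g e \<inter> C \<inter> D) = 1"
    and p: "p \<in> grelint g e (gspace g e \<inter> C \<inter> D)"
  shows "p \<in> interior (C \<union> D)"
proof -
  define S where "S = gspace g e \<inter> C \<inter> D"
  have "S \<noteq> {}"
    using p interior_of_subset by (fastforce simp: S_def grelint_def)
  then obtain a b where ab: "a \<noteq> 0" "g \<noteq> Euclidean \<longrightarrow> b = 0"
    "\<forall>x\<in>C. a \<bullet> x \<le> b" "\<forall>x\<in>D. b \<le> a \<bullet> x"
    using model_convex_separation[OF C D disj] by (auto simp: S_def)
  have "S \<subseteq> {x. a \<bullet> x = b}"
    using ab(3,4) by (force simp: S_def)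
  then have hull: "ghull g e S = gspace g e \<inter> {x. a \<bullet> x = b}"
    using ghull_eq_hyperplane[OF _ \<open>S \<noteq> {}\<close> _ ab(1,2)] codim by (auto simp: S_def)
  obtain W where "open W" "p \<in> W"
    and lift: "\<And>w. w \<in> W \<Longrightarrow> a \<bullet> w = b \<Longrightarrow> w \<in> gcone g e \<and> gproj g e w \<in> S"
    using grelint_hyperplane_lift[OF p[folded S_def] hull ab(2)] by blast
  have onW: "w \<in> C \<and> w \<in> D" if "w \<in> W" "a \<bullet> w = b" for w
    using lift[OF that] gproj_mem_iff[of g _ w e] C(1) D(1) by (auto simp: model_convex_def S_def)
  have "p \<in> S"
    using p interior_of_subset by (fastforce simp: S_def grelint_def)
  obtain y1 y2 where y: "y1 \<in> interior C" "y2 \<in> interior D"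
    using C D ginterior_subset_interior by blast
  have "a \<bullet> y1 < b" "(-a) \<bullet> y2 < -b"
    using y interior_mono[of C "{x. a \<bullet> x \<le> b}"] interior_mono[of D "{x. (-a) \<bullet> x \<le> -b}"]
      ab(1,3,4) by auto
  have "p \<in> C" "p \<in> D" "a \<bullet> p = b"
    using \<open>p \<in> S\<close> \<open>S \<subseteq> {x. a \<bullet> x = b}\<close> by (auto simp: S_def)
  have "convex C" "convex D"
    using C(1) D(1) by (auto simp: model_convex_def)
  obtain d1 where "d1 > 0" and d1: "\<And>w. dist w p < d1 \<Longrightarrow> a \<bullet> w \<le> b \<Longrightarrow> w \<in> C"
    using convex_contains_halfball[OF \<open>convex C\<close> interior_subset[THEN subsetD, OF y(1)]
        \<open>a \<bullet> y1 < b\<close> \<open>p \<in> C\<close> \<open>a \<bullet> p = b\<close> \<open>open W\<close> \<open>p \<in> W\<close>] onW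
    by blast
  obtain d2 where "d2 > 0" and d2: "\<And>w. dist w p < d2 \<Longrightarrow> b \<le> a \<bullet> w \<Longrightarrow> w \<in> D"
    using convex_contains_halfball[OF \<open>convex D\<close> interior_subset[THEN subsetD, OF y(2)]
        \<open>(-a) \<bullet> y2 < -b\<close> \<open>p \<in> D\<close> _ \<open>open W\<close> \<open>p \<in> W\<close>] onW \<open>a \<bullet> p = b\<close>
    by auto
  have "ball p (min d1 d2) \<subseteq> C \<union> D"
  proof
    fix w
    assume "w \<in> ball p (min d1 d2)"
    then show "w \<in> C \<union> D"
      using d1[of w] d2[of w] by (cases "a \<bullet> w \<le> b") (auto simp: dist_commute)
  qed
  then show ?thesis
    using \<open>d1 > 0\<close> \<open>d2 > 0\<close> by (intro interiorI[of "ball p (min d1 d2)"]) auto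
qed

section \<open>Tessellations\<close>

locale tessellation =
  fixes g :: geom and e :: "'a::euclidean_space" and \<T> :: "'a set set"
  assumes e_Basis: "e \<in> Basis"
    and tessellation: "is_tessellation g e \<T>"
    and locally_finite: "glocally_finite g e \<T>"
begin

definition tile_cone :: "'a set \<Rightarrow> 'a set" where
  "tile_cone T = (SOME C. model_convex g C \<and> T = gspace g e \<inter> C)"

lemma norm_e: "norm e = 1"
  using e_Basis by simp

lemma model_convex_tile_cone: "T \<in> \<T> \<Longrightarrow> model_convex g (tile_cone T)"
  and gspace_Int_tile_cone: "T \<in> \<T> \<Longrightarrow> gspace g e \<inter> tile_cone T = T"
proof -
  assume "T \<in> \<T>"
  then have "is_polyhedron g e T"
    using tessellation by (simp add: is_tessellation_def)
  then have "\<exists>C. model_convex g C \<and> T = gspace g e \<inter> C"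
    using polyhedron_eq_model_convex[OF norm_e] by metis
  then have "model_convex g (tile_cone T) \<and> T = gspace g e \<inter> tile_cone T"
    unfolding tile_cone_def by (rule someI_ex)
  then show "model_convex g (tile_cone T)" "gspace g e \<inter> tile_cone T = T"
    by simp_all
qed

lemma Union_tiles: "\<Union>\<T> = gspace g e"
  using tessellation by (simp add: is_tessellation_def)

lemma tile_subset: "T \<in> \<T> \<Longrightarrow> T \<subseteq> gspace g e"
  using Union_tiles by blast

lemma closed_tile:
  assumes "T \<in> \<T>"
  shows "closed T"
proof -
  have "closed (gspace g e \<inter> tile_cone T)"
    using model_convex_tile_cone[OF assms]
    by (intro closed_Int closed_gspace[OF norm_e]) (simp add: model_convex_def)
  then show ?thesis
    by (simp add: gspace_Int_tile_cone[OF assms])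
qed

lemma closedin_tile: "T \<in> \<T> \<Longrightarrow> closedin (top_of_set (gspace g e)) T"
  using closedin_closed_Int[OF closed_tile, of T "gspace g e"] tile_subset[of T] by (simp add: Int_absorb1)

lemma gfrontier_tile_subset: "T \<in> \<T> \<Longrightarrow> top_of_set (gspace g e) frontier_of T \<subseteq> T"
  by (simp add: frontier_of_def closure_of_closedin closedin_tile Diff_subset)

lemma ginterior_tile_nonempty: "T \<in> \<T> \<Longrightarrow> ginterior g e T \<noteq> {}"
  using tessellation by (simp add: is_tessellation_def is_thick_def)

lemma ginterior_tiles_disjoint:
  "T \<in> \<T> \<Longrightarrow> A \<in> \<T> \<Longrightarrow> T \<noteq> A \<Longrightarrow> ginterior g e T \<inter> ginterior g e A = {}"
  using tessellation by (simp add: is_tessellation_def)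

lemma tile_subset_gclosure_ginterior:
  assumes "T \<in> \<T>"
  shows "T \<subseteq> gclosure g e (ginterior g e T)"
  using subset_gclosure_ginterior[OF model_convex_tile_cone[OF assms], of e]
    ginterior_tile_nonempty[OF assms]
  by (simp add: gspace_Int_tile_cone[OF assms])

lemma ginterior_tile_disjoint_tile:
  assumes "T \<in> \<T>" "A \<in> \<T>" "T \<noteq> A"
  shows "ginterior g e T \<inter> A = {}"
proof (rule ccontr)
  assume "ginterior g e T \<inter> A \<noteq> {}"
  then obtain y where "y \<in> ginterior g e T" "y \<in> gclosure g e (ginterior g e A)"
    using tile_subset_gclosure_ginterior[OF assms(2)] by blast
  then have "ginterior g e T \<inter> ginterior g e A \<noteq> {}"
    unfolding in_closure_of using openin_interior_of by blast
  then show False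
    using ginterior_tiles_disjoint[OF assms] by blast
qed

lemma gcodim_tile: "T \<in> \<T> \<Longrightarrow> gcodim g e T = 0"
  by (rule gcodim_eq_0_if_ginterior_nonempty[OF tile_subset ginterior_tile_nonempty])

lemma gcodim_Int_tiles_nonzero:
  assumes "T \<in> \<T>" "A \<in> \<T>" "T \<noteq> A" "T \<inter> A \<noteq> {}"
  shows "gcodim g e (T \<inter> A) \<noteq> 0"
proof
  have eq: "T \<inter> A = gspace g e \<inter> (tile_cone T \<inter> tile_cone A)"
    using gspace_Int_tile_cone assms(1,2) by blast
  assume "gcodim g e (T \<inter> A) = 0"
  then have "ginterior g e (T \<inter> A) \<noteq> {}"
    using ginterior_nonempty_if_gcodim_eq_0[OF model_convex_Int[OF model_convex_tile_cone
        model_convex_tile_cone], OF assms(1,2)] assms(4)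
    unfolding eq by blast
  moreover have "ginterior g e (T \<inter> A) \<subseteq> ginterior g e T \<inter> ginterior g e A"
    by (simp add: interior_of_mono)
  ultimately show False
    using ginterior_tiles_disjoint[OF assms(1-3)] by blast
qed

lemma finite_tiles_containing:
  assumes "x \<in> gspace g e"
  shows "finite {A \<in> \<T>. x \<in> A}"
proof -
  have "compact {x}" "{x} \<subseteq> gspace g e"
    using assms by auto
  then have "finite {A \<in> \<T>. A \<inter> {x} \<noteq> {}}"
    using locally_finite unfolding glocally_finite_def by blast
  moreover have "{A \<in> \<T>. A \<inter> {x} \<noteq> {}} = {A \<in> \<T>. x \<in> A}"
    by blast
  ultimately show ?thesis
    by simp
qed

lemma tiles_near_contain:
  assumes "x \<in> gspace g e"
  obtains r where "r > 0" "\<And>A z. A \<in> \<T> \<Longrightarrow> z \<in> A \<Longrightarrow> dist x z < r \<Longrightarrow> x \<in> A"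
proof -
  define K where "K = gspace g e \<inter> cball x 1"
  have "compact K" "K \<subseteq> gspace g e"
    unfolding K_def by (auto intro: closed_Int_compact closed_gspace[OF norm_e])
  then have "finite {A \<in> \<T>. A \<inter> K \<noteq> {}}"
    using spec[OF locally_finite[unfolded glocally_finite_def], of K] by blast
  then have "finite {A \<in> \<T>. A \<inter> K \<noteq> {} \<and> x \<notin> A}"
    by (rule finite_subset[rotated]) blast
  moreover have "\<forall>A \<in> {A \<in> \<T>. A \<inter> K \<noteq> {} \<and> x \<notin> A}. closed A"
    using closed_tile by blast
  ultimately have "open (- \<Union>{A \<in> \<T>. A \<inter> K \<noteq> {} \<and> x \<notin> A})"
    by (intro open_Compl closed_Union)
  moreover have "x \<in> - \<Union>{A \<in> \<T>. A \<inter> K \<noteq> {} \<and> x \<notin> A}"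
    by blast
  ultimately obtain r where "r > 0" and r: "ball x r \<subseteq> - \<Union>{A \<in> \<T>. A \<inter> K \<noteq> {} \<and> x \<notin> A}"
    by (meson open_contains_ball_eq)
  show ?thesis
  proof (rule that[of "min r 1"])
    show "min r 1 > 0"
      using \<open>r > 0\<close> by simp
    fix A z
    assume A: "A \<in> \<T>" "z \<in> A" "dist x z < min r 1"
    then have "z \<in> K" "z \<in> ball x r"
      using tile_subset[OF A(1)] by (auto simp: K_def)
    show "x \<in> A"
    proof (rule ccontr)
      assume "x \<notin> A"
      then have "z \<in> \<Union>{A \<in> \<T>. A \<inter> K \<noteq> {} \<and> x \<notin> A}"
        using A(1,2) \<open>z \<in> K\<close> by blast
      then show False
        using r \<open>z \<in> ball x r\<close> by blast
    qed
  qed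
qed

lemma is_side_Int_tiles:
  assumes T: "T \<in> \<T>" and A: "A \<in> \<T>" "A \<noteq> T"
    and "T \<inter> A \<noteq> {}" "gcodim g e (T \<inter> A) = 1"
  shows "is_side g e \<T> (T \<inter> A)"
proof -
  let ?C = "tile_cone T" and ?D = "tile_cone A"
  have eq: "T \<inter> A = gspace g e \<inter> ?C \<inter> ?D"
    using gspace_Int_tile_cone[OF T] gspace_Int_tile_cone[OF A(1)] by blast
  have "grelint g e (T \<inter> A) \<inter> B = {}" if B: "B \<in> \<T>" "B \<noteq> T" "B \<noteq> A" for B
  proof (rule ccontr)
    assume "grelint g e (T \<inter> A) \<inter> B \<noteq> {}"
    then obtain p where p: "p \<in> grelint g e (T \<inter> A)" "p \<in> B"
      by blast
    have "ginterior g e (gspace g e \<inter> ?C) \<noteq> {}" "ginterior g e (gspace g e \<inter> ?D) \<noteq> {}"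
      "ginterior g e (gspace g e \<inter> ?C) \<inter> ginterior g e (gspace g e \<inter> ?D) = {}"
      using ginterior_tile_nonempty[OF T] ginterior_tile_nonempty[OF A(1)]
        ginterior_tiles_disjoint[OF T A(1) A(2)[symmetric]]
      by (simp_all add: gspace_Int_tile_cone T A(1))
    then have "p \<in> interior (?C \<union> ?D)"
      using model_convex_interior_Un[OF model_convex_tile_cone[OF T] _ model_convex_tile_cone[OF A(1)]]
        assms(5) p(1)
      unfolding eq by blast
    have "gspace g e \<inter> interior (?C \<union> ?D) \<subseteq> T \<union> A"
      using interior_subset gspace_Int_tile_cone[OF T] gspace_Int_tile_cone[OF A(1)] by blast
    moreover have "p \<in> gclosure g e (ginterior g e B)"
      using p(2) tile_subset_gclosure_ginterior[OF B(1)] by blast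
    moreover have "p \<in> gspace g e \<inter> interior (?C \<union> ?D)"
      using \<open>p \<in> interior (?C \<union> ?D)\<close> p(2) tile_subset[OF B(1)] by blast
    moreover note closedin_tile[OF T]
    ultimately have "ginterior g e B \<inter> (ginterior g e T \<union> ginterior g e A) \<noteq> {}"
      using interior_of_meets_cover[OF _ openin_open_Int[OF open_interior]] by blast
    then show False
      using ginterior_tiles_disjoint[OF B(1) T B(2)] ginterior_tiles_disjoint[OF B(1) A(1) B(3)]
      by blast
  qed
  then have "\<forall>B\<in>\<T>. T \<inter> A \<subseteq> B \<or> grelint g e (T \<inter> A) \<inter> B = {}"
    by blast
  then show ?thesis
    unfolding is_side_def is_cell_def using assms(4,5) T A(1)
    by (intro conjI exI[of _ "{T, A}"]) auto
qed

lemma side_subset_gfrontier: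
  assumes T: "T \<in> \<T>" and S: "is_side g e \<T> S" "S \<subseteq> T"
  shows "S \<subseteq> top_of_set (gspace g e) frontier_of T"
proof
  fix x
  assume "x \<in> S"
  obtain \<S> where \<S>: "\<S> \<subseteq> \<T>" "\<S> \<noteq> {}" "S = \<Inter>\<S>"
    using S(1) by (auto simp: is_side_def is_cell_def)
  have "x \<notin> ginterior g e T"
  proof
    assume x: "x \<in> ginterior g e T"
    have "\<S> \<subseteq> {T}"
    proof
      fix B
      assume "B \<in> \<S>"
      then have "B \<in> \<T>" "x \<in> B"
        using \<S> \<open>x \<in> S\<close> by auto
      then show "B \<in> {T}"
        using ginterior_tile_disjoint_tile[OF T] x by blast
    qed
    then have "S = T"
      using \<S>(2,3) by blast
    then show False
      using S(1) gcodim_tile[OF T] by (simp add: is_side_def)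
  qed
  moreover have "x \<in> gclosure g e T"
    using \<open>x \<in> S\<close> S(2) tile_subset[OF T] closure_of_subset[of T "top_of_set (gspace g e)"] by auto
  ultimately show "x \<in> top_of_set (gspace g e) frontier_of T"
    by (simp add: frontier_of_def)
qed

lemma last_exit_from_tile:
  fixes \<gamma> :: "real \<Rightarrow> 'a"
  assumes T: "T \<in> \<T>" and x: "x \<in> gspace g e"
    and \<gamma>: "continuous_on {0..1} \<gamma>" "\<gamma> ` {0..1} \<subseteq> gspace g e" "\<gamma> 0 \<in> T" "\<gamma> 1 \<notin> T"
    and near: "\<And>t A. t \<in> {0..1} \<Longrightarrow> A \<in> \<T> \<Longrightarrow> \<gamma> t \<in> A \<Longrightarrow> x \<in> A"
  obtains t A where "t \<in> {0..1}" "A \<in> \<T>" "A \<noteq> T" "x \<in> A" "\<gamma> t \<in> T \<inter> A"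
proof -
  have "closed ({0..1} \<inter> \<gamma> -` T)"
    using continuous_closed_preimage[OF \<gamma>(1) closed_atLeastAtMost closed_tile[OF T]] .
  moreover have "0 \<in> {0..1} \<inter> \<gamma> -` T" "1 \<notin> {0..1} \<inter> \<gamma> -` T"
    using \<gamma>(3,4) by auto
  ultimately obtain t where "t \<in> {0..1} \<inter> \<gamma> -` T" "t < 1"
    and after: "\<And>s. t < s \<Longrightarrow> s \<notin> {0..1} \<inter> \<gamma> -` T"
    using last_point_in_closed[of "{0..1} \<inter> \<gamma> -` T"] by blast
  then have t: "t \<in> {0..<1}" "\<gamma> t \<in> T"
    by auto
  define Q where "Q = \<Union>{A \<in> \<T>. x \<in> A \<and> A \<noteq> T}"
  have "finite {A \<in> \<T>. x \<in> A \<and> A \<noteq> T}"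
    using finite_tiles_containing[OF x] by (rule finite_subset[rotated]) blast
  then have "closed Q"
    unfolding Q_def using closed_tile by blast
  then have "closed ({0..1} \<inter> \<gamma> -` Q)"
    using continuous_closed_preimage[OF \<gamma>(1) closed_atLeastAtMost] by blast
  moreover have "{t<..1} \<subseteq> {0..1} \<inter> \<gamma> -` Q"
  proof
    fix s
    assume s: "s \<in> {t<..1}"
    then have "s \<in> {0..1}"
      using t(1) by auto
    then obtain A where "A \<in> \<T>" "\<gamma> s \<in> A"
      using \<gamma>(2) Union_tiles by blast
    then show "s \<in> {0..1} \<inter> \<gamma> -` Q"
      using near[OF \<open>s \<in> {0..1}\<close>] after s \<open>s \<in> {0..1}\<close> by (auto simp: Q_def)
  qed
  ultimately have "closure {t<..1} \<subseteq> {0..1} \<inter> \<gamma> -` Q"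
    by (rule closure_minimal[rotated])
  moreover have "t \<in> closure {t<..1}"
    using t(1) by simp
  ultimately have "\<gamma> t \<in> Q"
    by blast
  then obtain A where "A \<in> \<T>" "x \<in> A" "A \<noteq> T" "\<gamma> t \<in> A"
    unfolding Q_def by blast
  moreover have "t \<in> {0..1}"
    using t(1) by simp
  ultimately show ?thesis
    using that t(2) by blast
qed

lemma gfrontier_near_point_outside_tile:
  assumes T: "T \<in> \<T>" and x: "x \<in> top_of_set (gspace g e) frontier_of T" and "\<rho> > 0"
    and M: "interior M = {}" "g \<noteq> Euclidean \<longrightarrow> cone M"
  obtains z where "z \<in> gspace g e \<inter> ball x \<rho>" "z \<notin> T" "z \<notin> M"
proof -
  have "x \<notin> ginterior g e T" "x \<in> gspace g e"
    using x gfrontier_tile_subset[OF T] tile_subset[OF T] by (auto simp: frontier_of_def)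
  moreover have "openin (top_of_set (gspace g e)) (gspace g e \<inter> ball x \<rho>)"
    by (simp add: openin_open_Int)
  ultimately have "\<not> gspace g e \<inter> ball x \<rho> \<subseteq> T"
    using interior_of_maximal \<open>\<rho> > 0\<close> by fastforce
  then have "gspace g e \<inter> ball x \<rho> - T \<noteq> {}"
    by blast
  moreover have "openin (top_of_set (gspace g e)) (gspace g e \<inter> ball x \<rho> - T)"
    using closedin_tile[OF T] by (simp add: openin_diff openin_open_Int)
  ultimately obtain z where "z \<in> gspace g e \<inter> ball x \<rho> - T" "z \<notin> M"
    using openin_gspace_avoids_nowhere_dense_cone[OF _ _ M] by blast
  then show ?thesis
    using that by blast
qed

lemma gfrontier_point_off_small_hulls:
  assumes T: "T \<in> \<T>" and x: "x \<in> top_of_set (gspace g e) frontier_of T" and "\<rho> > 0"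
  obtains z where "z \<in> gspace g e \<inter> ball x \<rho>" "z \<notin> T"
    "\<And>A. A \<in> \<T> \<Longrightarrow> x \<in> A \<Longrightarrow> 2 \<le> gcodim g e (T \<inter> A) \<Longrightarrow> z \<notin> model_hull g (insert y (T \<inter> A))"
proof -
  have "x \<in> T"
    using x gfrontier_tile_subset[OF T] by blast
  then have "x \<in> gspace g e"
    using tile_subset[OF T] by blast
  define \<B> where "\<B> = {A \<in> \<T>. x \<in> A \<and> 2 \<le> gcodim g e (T \<inter> A)}"
  define M where "M = (\<Union>A\<in>\<B>. model_hull g (insert y (T \<inter> A)))"
  have "finite \<B>"
    using finite_tiles_containing[OF \<open>x \<in> gspace g e\<close>]
    by (rule finite_subset[rotated]) (auto simp: \<B>_def)
  moreover have "closed N \<and> interior N = {}"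
    if N: "N \<in> (\<lambda>A. model_hull g (insert y (T \<inter> A))) ` \<B>" for N
  proof -
    obtain A where A: "A \<in> \<T>" "x \<in> A" "2 \<le> gcodim g e (T \<inter> A)" "N = model_hull g (insert y (T \<inter> A))"
      using N by (auto simp: \<B>_def)
    have "T \<inter> A \<subseteq> gspace g e" "T \<inter> A \<noteq> {}"
      using tile_subset[OF T] \<open>x \<in> T\<close> A(2) by auto
    then show ?thesis
      using interior_model_hull_insert[OF _ _ A(3)] A(4) closed_model_hull by blast
  qed
  ultimately have "interior M = {}"
    unfolding M_def by (rule interior_Union_closed_empty[OF finite_imageI])
  moreover have "g \<noteq> Euclidean \<longrightarrow> cone M"
    unfolding M_def using cone_model_hull by (intro impI cone_Union[rule_format]) blast
  ultimately obtain z where "z \<in> gspace g e \<inter> ball x \<rho>" "z \<notin> T" "z \<notin> M"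
    using gfrontier_near_point_outside_tile[OF T x \<open>\<rho> > 0\<close>] by blast
  then show ?thesis
    using that by (auto simp: M_def \<B>_def)
qed

lemma segment_leaves_tile_into_neighbour:
  assumes T: "T \<in> \<T>" and "x \<in> gspace g e" and "ball x \<rho> \<subseteq> gcone g e"
    and near: "\<And>A w. A \<in> \<T> \<Longrightarrow> w \<in> ball x \<rho> \<Longrightarrow> gproj g e w \<in> A \<Longrightarrow> x \<in> A"
    and y: "y \<in> ginterior g e T" "y \<in> ball x \<rho>" and z: "z \<in> gspace g e \<inter> ball x \<rho>" "z \<notin> T"
  obtains t A where "t > 0" "(1 - t) *\<^sub>R y + t *\<^sub>R z \<in> gcone g e" "A \<in> \<T>" "A \<noteq> T" "x \<in> A"
    "gproj g e ((1 - t) *\<^sub>R y + t *\<^sub>R z) \<in> T \<inter> A"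
proof -
  define \<gamma> where "\<gamma> t = gproj g e ((1 - t) *\<^sub>R y + t *\<^sub>R z)" for t
  have seg: "(1 - t) *\<^sub>R y + t *\<^sub>R z \<in> ball x \<rho>" if "t \<in> {0..1}" for t
    using convexD[OF convex_ball y(2), of z "1 - t" t] z(1) that by auto
  have "y \<in> T"
    using y(1) interior_of_subset[of _ T] by blast
  have "continuous_on {0..1} \<gamma>"
    unfolding \<gamma>_def using seg assms(3)
    by (intro continuous_on_compose2[OF continuous_on_gproj] continuous_intros) auto
  moreover have "\<gamma> ` {0..1} \<subseteq> gspace g e"
    unfolding \<gamma>_def using seg assms(3) gproj_in_gspace by blast
  moreover have "\<gamma> 0 = y" "\<gamma> 1 = z"
    using \<open>y \<in> T\<close> tile_subset[OF T] z(1) by (auto simp: \<gamma>_def)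
  moreover have "x \<in> A" if "t \<in> {0..1}" "A \<in> \<T>" "\<gamma> t \<in> A" for t A
    using near[OF that(2) seg[OF that(1)]] that(3) by (simp add: \<gamma>_def)
  ultimately obtain t A where t: "t \<in> {0..1}" and A: "A \<in> \<T>" "A \<noteq> T" "x \<in> A" "\<gamma> t \<in> T \<inter> A"
    using last_exit_from_tile[OF T \<open>x \<in> gspace g e\<close>, of \<gamma>] \<open>y \<in> T\<close> z(2) by blast
  have "t \<noteq> 0"
  proof
    assume "t = 0"
    then have "y \<in> A"
      using A(4) \<open>\<gamma> 0 = y\<close> by simp
    then show False
      using y(1) ginterior_tile_disjoint_tile[OF T A(1) A(2)[symmetric]] by blast
  qed
  then show ?thesis
    using that[of t A] t A seg[OF t] assms(3) by (auto simp: \<gamma>_def)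
qed

lemma gfrontier_tile_codim1_neighbour:
  assumes T: "T \<in> \<T>" and x: "x \<in> top_of_set (gspace g e) frontier_of T"
  obtains A where "A \<in> \<T>" "A \<noteq> T" "x \<in> A" "gcodim g e (T \<inter> A) = 1"
proof -
  have "x \<in> T"
    using x gfrontier_tile_subset[OF T] by blast
  then have "x \<in> gspace g e"
    using tile_subset[OF T] by blast
  obtain r where "r > 0" and near: "\<And>A z. A \<in> \<T> \<Longrightarrow> z \<in> A \<Longrightarrow> dist x z < r \<Longrightarrow> x \<in> A"
    using tiles_near_contain[OF \<open>x \<in> gspace g e\<close>] by blast
  obtain \<rho> where "\<rho> > 0" "ball x \<rho> \<subseteq> gcone g e"
    and \<rho>: "\<And>w. w \<in> ball x \<rho> \<Longrightarrow> dist x (gproj g e w) < r"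
    using gproj_near[OF \<open>x \<in> gspace g e\<close> \<open>r > 0\<close>] by blast
  have "x \<in> gclosure g e (ginterior g e T)"
    using tile_subset_gclosure_ginterior[OF T] \<open>x \<in> T\<close> by blast
  moreover have "openin (top_of_set (gspace g e)) (gspace g e \<inter> ball x \<rho>)"
    by (simp add: openin_open_Int)
  ultimately obtain y where y: "y \<in> ginterior g e T" "y \<in> ball x \<rho>"
    using \<open>x \<in> gspace g e\<close> \<open>\<rho> > 0\<close> unfolding in_closure_of
    by (metis IntD2 IntI centre_in_ball)
  \<comment> \<open>the segment from y to z can leave T only through an intersection of codimension 1\<close>
  obtain z where z: "z \<in> gspace g e \<inter> ball x \<rho>" "z \<notin> T"
    and off: "\<And>A. A \<in> \<T> \<Longrightarrow> x \<in> A \<Longrightarrow> 2 \<le> gcodim g e (T \<inter> A)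
                   \<Longrightarrow> z \<notin> model_hull g (insert y (T \<inter> A))"
    using gfrontier_point_off_small_hulls[OF T x \<open>\<rho> > 0\<close>] by blast
  obtain t A where t: "t > 0" "(1 - t) *\<^sub>R y + t *\<^sub>R z \<in> gcone g e" and A: "A \<in> \<T>" "A \<noteq> T" "x \<in> A"
    and exit: "gproj g e ((1 - t) *\<^sub>R y + t *\<^sub>R z) \<in> T \<inter> A"
    using segment_leaves_tile_into_neighbour[OF T \<open>x \<in> gspace g e\<close> \<open>ball x \<rho> \<subseteq> gcone g e\<close> _ y z]
      near \<rho> by blast
  have "z \<in> model_hull g (insert y (T \<inter> A))"
    using t exit by (rule gproj_segment_in_model_hull)
  then have "\<not> 2 \<le> gcodim g e (T \<inter> A)"
    using off A(1,3) by blast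
  moreover have "gcodim g e (T \<inter> A) \<noteq> 0"
    using gcodim_Int_tiles_nonzero[OF T A(1) A(2)[symmetric]] A(3) \<open>x \<in> T\<close> by blast
  ultimately have "gcodim g e (T \<inter> A) = 1"
    by linarith
  then show ?thesis
    by (rule that[OF A])
qed

theorem gfrontier_tile_eq_Union_sides:
  assumes T: "T \<in> \<T>"
  shows "top_of_set (gspace g e) frontier_of T = \<Union>{S. is_side g e \<T> S \<and> S \<subseteq> T}"
proof
  show "top_of_set (gspace g e) frontier_of T \<subseteq> \<Union>{S. is_side g e \<T> S \<and> S \<subseteq> T}"
  proof
    fix x
    assume x: "x \<in> top_of_set (gspace g e) frontier_of T"
    then obtain A where A: "A \<in> \<T>" "A \<noteq> T" "x \<in> A" "gcodim g e (T \<inter> A) = 1"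
      using gfrontier_tile_codim1_neighbour[OF T] by blast
    moreover have "x \<in> T"
      using x gfrontier_tile_subset[OF T] by blast
    ultimately have "is_side g e \<T> (T \<inter> A)" "x \<in> T \<inter> A"
      using is_side_Int_tiles[OF T A(1,2)] by blast+
    then show "x \<in> \<Union>{S. is_side g e \<T> S \<and> S \<subseteq> T}"
      by blast
  qed
  show "\<Union>{S. is_side g e \<T> S \<and> S \<subseteq> T} \<subseteq> top_of_set (gspace g e) frontier_of T"
    using side_subset_gfrontier[OF T] by blast
qed

end

theorem proposition4p6:
  fixes g :: geom and e :: "'a::euclidean_space" and \<T> :: "'a set set" and T :: "'a set"
  assumes "e \<in> Basis"
    and "is_tessellation g e \<T>"
    and "glocally_finite g e \<T>"
    and "T \<in> \<T>"
  shows "top_of_set (gspace g e) frontier_of T = \<Union> {S. is_side g e \<T> S \<and> S \<subseteq> T}"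
proof -
  interpret tessellation g e \<T>
    using assms(1-3) by unfold_locales
  show ?thesis
    using gfrontier_tile_eq_Union_sides[OF assms(4)] .
qed

end
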